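(* Let $G$ be a finite simple connected graph. Suppose that all the holes in $G$ are pairwise edge-disjoint and that $G$ has exactly one non-edge maximal clique $K$. Then a cycle $C$ in $G$ is a hole if and only if $|V(K)\cap V(C)|\le 2$.
   Context: A hole of a graph is an induced (chordless) cycle of length at least $4$. A clique is a complete subgraph; a clique $K$ is non-edge if $|V(K)|\ge 3$. Cycles have length at least $3$. *)

theory Defs
  imports Main
begin

definition simple_graph :: "'a set \<Rightarrow> ('a \<Rightarrow> 'a \<Rightarrow> bool) \<Rightarrow> bool" where
  "simple_graph V E \<longleftrightarrow> finite V \<and> (\<forall>u v. E u v \<longrightarrow> u \<in> V \<and> v \<in> V) \<and>
     (\<forall>u v. E u v \<longrightarrow> E v u) \<and> (\<forall>v. \<not> E v v)"

definition connected_graph :: "'a set \<Rightarrow> ('a \<Rightarrow> 'a \<Rightarrow> bool) \<Rightarrow> bool" where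
  "connected_graph V E \<longleftrightarrow> V \<noteq> {} \<and> (\<forall>u\<in>V. \<forall>v\<in>V. E\<^sup>*\<^sup>* u v)"

definition is_cycle :: "'a set \<Rightarrow> ('a \<Rightarrow> 'a \<Rightarrow> bool) \<Rightarrow> 'a list \<Rightarrow> bool" where
  "is_cycle V E C \<longleftrightarrow> length C \<ge> 3 \<and> distinct C \<and> set C \<subseteq> V \<and>
     (\<forall>i < length C. E (C ! i) (C ! ((i + 1) mod length C)))"

definition cycle_edges :: "'a list \<Rightarrow> 'a set set" where
  "cycle_edges C = {{C ! i, C ! ((i + 1) mod length C)} | i. i < length C}"

definition is_hole :: "'a set \<Rightarrow> ('a \<Rightarrow> 'a \<Rightarrow> bool) \<Rightarrow> 'a list \<Rightarrow> bool" where
  "is_hole V E C \<longleftrightarrow> is_cycle V E C \<and> length C \<ge> 4 \<and>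
     (\<forall>u\<in>set C. \<forall>v\<in>set C. E u v \<longrightarrow> {u, v} \<in> cycle_edges C)"

definition is_clique :: "'a set \<Rightarrow> ('a \<Rightarrow> 'a \<Rightarrow> bool) \<Rightarrow> 'a set \<Rightarrow> bool" where
  "is_clique V E K \<longleftrightarrow> K \<subseteq> V \<and> (\<forall>u\<in>K. \<forall>v\<in>K. u \<noteq> v \<longrightarrow> E u v)"

definition maximal_clique :: "'a set \<Rightarrow> ('a \<Rightarrow> 'a \<Rightarrow> bool) \<Rightarrow> 'a set \<Rightarrow> bool" where
  "maximal_clique V E K \<longleftrightarrow> is_clique V E K \<and> K \<noteq> {} \<and>
     (\<forall>K'. is_clique V E K' \<and> K \<subseteq> K' \<longrightarrow> K' = K)"

text \<open>Distinct holes (different as subgraphs, i.e. with different edge sets) share no edge.\<close>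
definition holes_edge_disjoint :: "'a set \<Rightarrow> ('a \<Rightarrow> 'a \<Rightarrow> bool) \<Rightarrow> bool" where
  "holes_edge_disjoint V E \<longleftrightarrow> (\<forall>C1 C2. is_hole V E C1 \<and> is_hole V E C2 \<and>
     cycle_edges C1 \<noteq> cycle_edges C2 \<longrightarrow> cycle_edges C1 \<inter> cycle_edges C2 = {})"

end

theory Submission
  imports Defs
begin

(* Only if: the vertices of K that lie on a hole are pairwise adjacent, but a hole of length
   at least 4 contains no triangle, since three pairwise adjacent vertices would have to be
   pairwise consecutive on it.

   If: every triangle extends to a maximal clique with at least three vertices, which must
   be K; so if C meets K in at most two vertices, the vertex set of C is triangle-free.  A
   triangle-free cycle has length at least 4, and it has no chord: a chord uv splits C into
   two arcs, each of which together with uv contains a hole through uv (take a shortest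
   u-v path inside the arc).  The hole from the first arc also uses an edge from u into the
   interior of that arc, which the second hole avoids, so two different holes share the
   edge uv, contradicting edge-disjointness. *)

lemma simple_graph_sym: "simple_graph V E \<Longrightarrow> E u v \<Longrightarrow> E v u"
  by (simp add: simple_graph_def)

lemma simple_graph_irrefl: "simple_graph V E \<Longrightarrow> \<not> E v v"
  by (simp add: simple_graph_def)

lemma is_cycle_iff_successively:
  "is_cycle V E C \<longleftrightarrow>
     3 \<le> length C \<and> distinct C \<and> set C \<subseteq> V \<and> successively E C \<and> E (last C) (hd C)"
proof (cases "C = []")
  case False
  define m where "m = length C - 1"
  have len: "length C = Suc m"
    using False by (simp add: m_def)
  have "(\<forall>i < length C. E (C ! i) (C ! (Suc i mod length C))) \<longleftrightarrow>
      E (C ! m) (C ! 0) \<and> (\<forall>i < m. E (C ! i) (C ! Suc i))"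
    unfolding len All_less_Suc by simp
  also have "\<dots> \<longleftrightarrow> successively E C \<and> E (last C) (hd C)"
  proof -
    have "last C = C ! m" "hd C = C ! 0"
      using False by (simp_all add: last_conv_nth hd_conv_nth m_def)
    moreover have "successively E C \<longleftrightarrow> (\<forall>i < m. E (C ! i) (C ! Suc i))"
      unfolding successively_conv_nth len by simp
    ultimately show ?thesis
      by (simp add: conj_commute)
  qed
  finally show ?thesis
    by (simp add: is_cycle_def)
qed (simp add: is_cycle_def)

lemma cycle_edge_nth: "i < length C \<Longrightarrow> {C ! i, C ! (Suc i mod length C)} \<in> cycle_edges C"
  unfolding cycle_edges_def by auto

lemma cycle_edges_nth_iff:
  assumes "distinct C" "i < length C" "j < length C"
  shows "{C ! i, C ! j} \<in> cycle_edges C \<longleftrightarrow>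
    j = Suc i mod length C \<or> i = Suc j mod length C"
proof
  assume "{C ! i, C ! j} \<in> cycle_edges C"
  then obtain a where a: "a < length C" "{C ! i, C ! j} = {C ! a, C ! (Suc a mod length C)}"
    unfolding cycle_edges_def by auto
  have a': "Suc a mod length C < length C"
    using a(1) by (intro mod_less_divisor) linarith
  have idx: "C ! x = C ! y \<longleftrightarrow> x = y" if "x < length C" "y < length C" for x y
    using assms(1) that by (simp add: nth_eq_iff_index_eq)
  have "(C ! i = C ! a \<and> C ! j = C ! (Suc a mod length C)) \<or>
      (C ! i = C ! (Suc a mod length C) \<and> C ! j = C ! a)"
    using a(2) by (simp add: doubleton_eq_iff)
  then show "j = Suc i mod length C \<or> i = Suc j mod length C"
    using idx[OF assms(2) a(1)] idx[OF assms(3) a(1)] idx[OF assms(2) a'] idx[OF assms(3) a']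
    by blast
next
  assume "j = Suc i mod length C \<or> i = Suc j mod length C"
  then show "{C ! i, C ! j} \<in> cycle_edges C"
  proof
    assume "j = Suc i mod length C"
    then show ?thesis
      using cycle_edge_nth[OF assms(2)] by simp
  next
    assume "i = Suc j mod length C"
    then have "{C ! j, C ! i} \<in> cycle_edges C"
      using cycle_edge_nth[OF assms(3)] by simp
    then show ?thesis
      by (simp add: insert_commute)
  qed
qed

lemma cycle_edges_subset: "e \<in> cycle_edges C \<Longrightarrow> e \<subseteq> set C"
proof -
  assume "e \<in> cycle_edges C"
  then obtain i where i: "i < length C" "e = {C ! i, C ! (Suc i mod length C)}"
    unfolding cycle_edges_def by auto
  then have "Suc i mod length C < length C"
    by (intro mod_less_divisor) linarith
  then show "e \<subseteq> set C"
    using i by auto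
qed

lemma cycle_edge_last_hd: "C \<noteq> [] \<Longrightarrow> {last C, hd C} \<in> cycle_edges C"
  using cycle_edge_nth[of "length C - 1" C] by (simp add: last_conv_nth hd_conv_nth)

lemma cycle_edge_consecutive: "{x, y} \<in> cycle_edges (xs @ x # y # zs)"
  using cycle_edge_nth[of "length xs" "xs @ x # y # zs"] by (simp add: nth_append)

definition triangle_free :: "('a \<Rightarrow> 'a \<Rightarrow> bool) \<Rightarrow> 'a set \<Rightarrow> bool" where
  "triangle_free E S \<longleftrightarrow> (\<forall>x\<in>S. \<forall>y\<in>S. \<forall>z\<in>S. \<not> (E x y \<and> E y z \<and> E x z))"

lemma triangle_free_subset: "triangle_free E S \<Longrightarrow> T \<subseteq> S \<Longrightarrow> triangle_free E T"
  unfolding triangle_free_def by blast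

lemma no_cyclic_triangle_of_indices:
  assumes "i < n" "j < n" "k < n" "i \<noteq> j" "j \<noteq> k" "i \<noteq> k" "4 \<le> n"
    and "j = Suc i mod n \<or> i = Suc j mod n"
    and "k = Suc j mod n \<or> j = Suc k mod n"
    and "k = Suc i mod n \<or> i = Suc k mod n"
  shows False
proof -
  have wrap: "Suc x mod n = (if Suc x = n then 0 else Suc x)" if "x < n" for x
    using that by (simp add: mod_Suc)
  show False
    using assms wrap[OF assms(1)] wrap[OF assms(2)] wrap[OF assms(3)] by (auto split: if_splits)
qed

lemma hole_no_triangle:
  assumes "is_hole V E C" "x \<in> set C" "y \<in> set C" "z \<in> set C" "x \<noteq> y" "y \<noteq> z" "x \<noteq> z"
    and "E x y" "E y z" "E x z"
  shows False
proof -
  have chordless: "\<forall>u\<in>set C. \<forall>v\<in>set C. E u v \<longrightarrow> {u, v} \<in> cycle_edges C"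
    and long: "4 \<le> length C" and dist: "distinct C"
    using assms(1) by (auto simp: is_hole_def is_cycle_def)
  obtain i j k where ijk: "i < length C" "j < length C" "k < length C"
    and xyz: "x = C ! i" "y = C ! j" "z = C ! k"
    using assms(2-4) by (metis in_set_conv_nth)
  have "{C ! i, C ! j} \<in> cycle_edges C" "{C ! j, C ! k} \<in> cycle_edges C"
    "{C ! i, C ! k} \<in> cycle_edges C"
    using chordless assms(2-4,8-10) xyz by auto
  moreover have "i \<noteq> j" "j \<noteq> k" "i \<noteq> k"
    using assms(5-7) xyz by auto
  ultimately show False
    using no_cyclic_triangle_of_indices[OF ijk _ _ _ long]
    by (simp add: cycle_edges_nth_iff[OF dist] ijk)
qed

lemma hole_meets_clique_in_at_most_two:
  assumes "is_hole V E C" "is_clique V E K"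
  shows "card (K \<inter> set C) \<le> 2"
proof (rule ccontr)
  assume "\<not> card (K \<inter> set C) \<le> 2"
  then have "3 \<le> card (K \<inter> set C)"
    by simp
  then obtain T where T: "T \<subseteq> K \<inter> set C" "card T = 3"
    by (rule obtain_subset_with_card_n)
  then obtain x y z where xyz: "T = {x, y, z}" "x \<noteq> y" "y \<noteq> z" "x \<noteq> z"
    by (auto simp: card_3_iff)
  then have "x \<in> K \<inter> set C" "y \<in> K \<inter> set C" "z \<in> K \<inter> set C"
    using T(1) by auto
  then show False
    using hole_no_triangle[OF assms(1) _ _ _ xyz(2-4)] assms(2) xyz(2-4)
    unfolding is_clique_def by blast
qed

lemma clique_extends_to_maximal:
  assumes "finite V" "is_clique V E T" "T \<noteq> {}"
  obtains M where "maximal_clique V E M" "T \<subseteq> M"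
proof -
  let ?Q = "{K. is_clique V E K \<and> T \<subseteq> K}"
  have "?Q \<subseteq> Pow V"
    by (auto simp: is_clique_def)
  then have "finite ?Q"
    by (rule finite_subset) (simp add: assms(1))
  moreover have "T \<in> ?Q"
    using assms(2) by simp
  ultimately obtain M where M: "M \<in> ?Q" "\<forall>K\<in>?Q. M \<subseteq> K \<longrightarrow> M = K"
    using finite_has_maximal[of ?Q] by blast
  have "maximal_clique V E M"
    unfolding maximal_clique_def using M assms(3) by blast
  then show thesis
    using M(1) that by blast
qed

lemma triangle_in_unique_large_clique:
  assumes "simple_graph V E" "maximal_clique V E K"
    and "\<forall>K'. maximal_clique V E K' \<and> card K' \<ge> 3 \<longrightarrow> K' = K"
    and "E x y" "E y z" "E x z"
  shows "{x, y, z} \<subseteq> K"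
proof -
  have finV: "finite V"
    using assms(1) by (simp add: simple_graph_def)
  have "is_clique V E {x, y, z}"
    using assms(1,4-6) by (auto simp: is_clique_def simple_graph_def)
  then obtain M where M: "maximal_clique V E M" "{x, y, z} \<subseteq> M"
    using clique_extends_to_maximal[OF finV] by blast
  have "x \<noteq> y" "y \<noteq> z" "x \<noteq> z"
    using assms(4-6) simple_graph_irrefl[OF assms(1)] by auto
  then have "card {x, y, z} = 3"
    by simp
  moreover have "M \<subseteq> V"
    using M(1) by (simp add: maximal_clique_def is_clique_def)
  then have "finite M"
    using finV by (rule finite_subset)
  ultimately have "3 \<le> card M"
    using card_mono[OF _ M(2)] by simp
  then have "M = K"
    using assms(3) M(1) by blast
  then show ?thesis
    using M(2) by simp
qed

lemma triangle_free_outside_large_clique: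
  assumes "simple_graph V E" "maximal_clique V E K"
    and "\<forall>K'. maximal_clique V E K' \<and> card K' \<ge> 3 \<longrightarrow> K' = K"
    and "card (K \<inter> S) \<le> 2"
  shows "triangle_free E S"
  unfolding triangle_free_def
proof (intro ballI notI)
  fix x y z assume xyz: "x \<in> S" "y \<in> S" "z \<in> S" and adj: "E x y \<and> E y z \<and> E x z"
  have "{x, y, z} \<subseteq> K \<inter> S"
    using triangle_in_unique_large_clique[OF assms(1-3)] adj xyz by blast
  moreover have "K \<inter> S \<subseteq> V"
    using assms(2) by (auto simp: maximal_clique_def is_clique_def)
  then have "finite (K \<inter> S)"
    using assms(1) finite_subset by (auto simp: simple_graph_def)
  ultimately have "card {x, y, z} \<le> 2"
    using card_mono[of "K \<inter> S" "{x, y, z}"] assms(4) by linarith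
  moreover have "x \<noteq> y" "y \<noteq> z" "x \<noteq> z"
    using adj simple_graph_irrefl[OF assms(1)] by auto
  ultimately show False
    by simp
qed

lemma triangle_free_cycle_long:
  assumes "simple_graph V E" "is_cycle V E C" "triangle_free E (set C)"
  shows "4 \<le> length C"
proof (rule ccontr)
  assume "\<not> 4 \<le> length C"
  then have len: "length C = 3"
    using assms(2) by (simp add: is_cycle_def)
  then have step: "E (C ! i) (C ! (Suc i mod 3))" if "i < 3" for i
    using assms(2) that unfolding is_cycle_def by auto
  have "E (C ! 0) (C ! 1)" "E (C ! 1) (C ! 2)" "E (C ! 2) (C ! 0)"
    using step[of 0] step[of 1] step[of 2] by (simp_all add: numeral_2_eq_2)
  then have "E (C ! 0) (C ! 1) \<and> E (C ! 1) (C ! 2) \<and> E (C ! 0) (C ! 2)"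
    using simple_graph_sym[OF assms(1)] by blast
  moreover have "C ! 0 \<in> set C" "C ! 1 \<in> set C" "C ! 2 \<in> set C"
    using len by simp_all
  ultimately show False
    using assms(3) unfolding triangle_free_def by blast
qed

definition is_path ::
    "('a \<Rightarrow> 'a \<Rightarrow> bool) \<Rightarrow> 'a set \<Rightarrow> 'a \<Rightarrow> 'a \<Rightarrow> 'a list \<Rightarrow> bool" where
  "is_path E S u v q \<longleftrightarrow>
     q \<noteq> [] \<and> hd q = u \<and> last q = v \<and> distinct q \<and> set q \<subseteq> S \<and> successively E q"

lemma path_shortcut:
  assumes "is_path E S u v q" "a < b" "b < length q" "E (q ! a) (q ! b)"
  shows "is_path E S u v (take (Suc a) q @ drop b q)"
proof -
  let ?pre = "take (Suc a) q" and ?suf = "drop b q"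
  have q: "q \<noteq> []" "hd q = u" "last q = v" "distinct q" "set q \<subseteq> S" "successively E q"
    using assms(1) by (auto simp: is_path_def)
  have "distinct (?pre @ ?suf)"
    using q(4) set_take_disj_set_drop_if_distinct[OF q(4), of "Suc a" b] assms(2) by simp
  moreover have "successively E (?pre @ ?suf)"
  proof -
    have "last ?pre = q ! a"
      using assms(2,3) by (subst last_conv_nth) (auto simp: min_def)
    moreover have "hd ?suf = q ! b"
      using assms(3) by (simp add: hd_drop_conv_nth)
    moreover have "successively E ?pre" "successively E ?suf"
      using q(6) by (simp_all add: successively_conv_nth)
    ultimately show ?thesis
      using assms(2-4) by (simp add: successively_append_iff)
  qed
  moreover have "hd (?pre @ ?suf) = u" "last (?pre @ ?suf) = v"
    using q(1-3) assms(2,3) by (simp_all add: hd_append)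
  moreover have "set (?pre @ ?suf) \<subseteq> S"
    using q(5) set_take_subset set_drop_subset by fastforce
  ultimately show ?thesis
    using q(1) by (simp add: is_path_def)
qed

lemma closed_path_is_hole:
  assumes "simple_graph V E" "is_path E V u v q" "3 \<le> length q" "E v u"
    and "triangle_free E (set q)"
    and no_shortcut: "\<And>a b. a < b \<Longrightarrow> b < length q \<Longrightarrow> E (q ! a) (q ! b) \<Longrightarrow>
      b = Suc a \<or> (a = 0 \<and> b = length q - 1)"
  shows "is_hole V E q"
proof -
  have dist: "distinct q"
    using assms(2) by (simp add: is_path_def)
  have cyc: "is_cycle V E q"
    using assms(2-4) by (auto simp: is_path_def is_cycle_iff_successively)
  have edge: "{q ! a, q ! b} \<in> cycle_edges q"
    if ab: "a < b" "b < length q" "E (q ! a) (q ! b)" for a b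
  proof -
    from no_shortcut[OF ab] have "b = Suc a mod length q \<or> a = Suc b mod length q"
    proof
      assume "a = 0 \<and> b = length q - 1"
      moreover have "Suc (length q - 1) = length q"
        using ab(2) by simp
      ultimately show ?thesis
        by simp
    qed (use ab(2) in simp)
    then show ?thesis
      using cycle_edges_nth_iff[OF dist] ab by simp
  qed
  have "{x, y} \<in> cycle_edges q" if xy: "x \<in> set q" "y \<in> set q" "E x y" for x y
  proof -
    obtain a b where ab: "a < length q" "b < length q" "x = q ! a" "y = q ! b"
      using xy(1,2) by (metis in_set_conv_nth)
    have "a < b \<or> b < a"
      using ab xy(3) simple_graph_irrefl[OF assms(1)] by (cases "a = b") auto
    then show ?thesis
    proof
      assume "a < b"
      then show ?thesis
        using edge ab xy(3) by blast
    next
      assume "b < a"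
      then have "{y, x} \<in> cycle_edges q"
        using edge ab simple_graph_sym[OF assms(1) xy(3)] by blast
      then show ?thesis
        by (simp add: insert_commute)
    qed
  qed
  then show ?thesis
    using cyc triangle_free_cycle_long[OF assms(1) cyc assms(5)] by (simp add: is_hole_def)
qed

(* A triangle-free path from u to v with at least three vertices, closed by the edge vu,
   contains a hole which is itself a u-v path inside it (and so uses the edge vu): a
   shortest such path has no shortcut. *)
lemma closed_path_contains_hole:
  assumes "simple_graph V E" "is_path E V u v p" "3 \<le> length p" "E v u"
    and "triangle_free E (set p)"
  obtains H where "is_hole V E H" "is_path E (set p) u v H"
proof -
  define P where "P q \<longleftrightarrow> is_path E (set p) u v q \<and> 3 \<le> length q" for q
  have "P p"
    using assms(2,3) by (simp add: P_def is_path_def)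
  then obtain q where q: "P q" and shortest: "\<And>q'. P q' \<Longrightarrow> length q \<le> length q'"
    using ex_has_least_nat[of P p length] by blast
  have q_path: "is_path E (set p) u v q" and q_len: "3 \<le> length q"
    using q by (simp_all add: P_def)
  have no_shortcut: "b = Suc a \<or> (a = 0 \<and> b = length q - 1)"
    if ab: "a < b" "b < length q" "E (q ! a) (q ! b)" for a b
  proof (rule ccontr)
    assume far: "\<not> (b = Suc a \<or> (a = 0 \<and> b = length q - 1))"
    let ?q' = "take (Suc a) q @ drop b q"
    have "length ?q' = Suc a + (length q - b)"
      using ab by simp
    then have "3 \<le> length ?q'" "length ?q' < length q"
      using ab far by auto
    then show False
      using path_shortcut[OF q_path ab] shortest[of ?q'] by (simp add: P_def)
  qed
  have "set q \<subseteq> set p"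
    using q_path by (simp add: is_path_def)
  moreover have "set p \<subseteq> V"
    using assms(2) by (simp add: is_path_def)
  ultimately have path_V: "is_path E V u v q"
    using q_path by (auto simp: is_path_def)
  have tf_q: "triangle_free E (set q)"
    using assms(5) \<open>set q \<subseteq> set p\<close> by (rule triangle_free_subset)
  have "is_hole V E q"
    by (rule closed_path_is_hole[OF assms(1) path_V q_len assms(4) tf_q no_shortcut])
  then show thesis
    using q_path that by blast
qed

lemma successively_rotate:
  assumes "successively E (xs @ ys)" "E (last ys) (hd xs)"
  shows "successively E (ys @ xs)"
  using assms by (cases "xs = []"; cases "ys = []") (auto simp: successively_append_iff)

lemma cycle_arcs_are_paths:
  assumes "is_cycle V E C" "C = xs @ u # ys @ v # zs"
  shows "is_path E V u v (u # ys @ [v])" "is_path E V v u (v # zs @ xs @ [u])"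
proof -
  have C: "distinct C" "set C \<subseteq> V" "successively E C" "E (last C) (hd C)"
    using assms(1) by (simp_all add: is_cycle_iff_successively)
  have "successively E (xs @ (u # ys @ [v]) @ zs)"
    using C(3) assms(2) by simp
  then have "successively E (u # ys @ [v])"
    by (simp only: successively_append_iff)
  then show "is_path E V u v (u # ys @ [v])"
    using C(1,2) assms(2) by (auto simp: is_path_def)
  have "successively E ((xs @ u # ys) @ (v # zs))" "E (last (v # zs)) (hd (xs @ u # ys))"
    using C(3,4) assms(2) by (auto simp: hd_append split: if_splits)
  then have "successively E ((v # zs) @ (xs @ u # ys))"
    by (rule successively_rotate)
  then have "successively E ((v # zs @ xs @ [u]) @ ys)"
    by simp
  then have "successively E (v # zs @ xs @ [u])"
    by (simp only: successively_append_iff)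
  then show "is_path E V v u (v # zs @ xs @ [u])"
    using C(1,2) assms(2) by (auto simp: is_path_def)
qed

lemma non_edge_split_has_gaps:
  assumes "C = xs @ x # ys @ y # zs" "{x, y} \<notin> cycle_edges C"
  shows "ys \<noteq> []" "zs @ xs \<noteq> []"
proof -
  show "ys \<noteq> []"
    using assms cycle_edge_consecutive[of x y xs zs] by auto
  show "zs @ xs \<noteq> []"
  proof
    assume "zs @ xs = []"
    then have "{last C, hd C} = {x, y}"
      using assms(1) by auto
    then show False
      using assms cycle_edge_last_hd[of C] by auto
  qed
qed

lemma chord_splits_cycle:
  assumes "u \<in> set C" "v \<in> set C" "u \<noteq> v" "{u, v} \<notin> cycle_edges C"
  obtains x y xs ys zs where "{x, y} = {u, v}" "C = xs @ x # ys @ y # zs"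
    "ys \<noteq> []" "zs @ xs \<noteq> []"
proof -
  obtain xs r where C: "C = xs @ u # r"
    using assms(1) split_list by fastforce
  then have "v \<in> set r \<or> v \<in> set xs"
    using assms(2,3) by auto
  then obtain x y xs ys zs where "{x, y} = {u, v}" "C = xs @ x # ys @ y # zs"
  proof
    assume "v \<in> set r"
    then obtain ys zs where "r = ys @ v # zs"
      using split_list by fastforce
    then show thesis
      using that[of u v xs ys zs] C by simp
  next
    assume "v \<in> set xs"
    then obtain ws ys where "xs = ws @ v # ys"
      using split_list by fastforce
    then show thesis
      using that[of v u ws ys r] C by (simp add: insert_commute)
  qed
  then show thesis
    using that non_edge_split_has_gaps assms(4) by metis
qed

(* A chord of a triangle-free cycle produces two different holes through the chord; edge-
   disjointness of holes rules this out. *)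
lemma triangle_free_cycle_has_no_chord:
  assumes sg: "simple_graph V E" and disj: "holes_edge_disjoint V E"
    and cyc: "is_cycle V E C" and tf: "triangle_free E (set C)"
    and split: "C = xs @ u # ys @ v # zs" "ys \<noteq> []" "zs @ xs \<noteq> []"
    and chord: "E u v"
  shows False
proof -
  let ?p1 = "u # ys @ [v]" and ?p2 = "v # zs @ xs @ [u]"
  have "set ?p1 \<subseteq> set C" "set ?p2 \<subseteq> set C"
    using split(1) by auto
  then have tf1: "triangle_free E (set ?p1)" and tf2: "triangle_free E (set ?p2)"
    using tf triangle_free_subset by blast+
  have len1: "3 \<le> length ?p1" and len2: "3 \<le> length ?p2"
    using split(2,3) by (auto simp: Suc_le_eq)
  obtain H1 where H1: "is_hole V E H1" "is_path E (set ?p1) u v H1"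
    using closed_path_contains_hole[OF sg cycle_arcs_are_paths(1)[OF cyc split(1)] len1
        simple_graph_sym[OF sg chord] tf1] .
  obtain H2 where H2: "is_hole V E H2" "is_path E (set ?p2) v u H2"
    using closed_path_contains_hole[OF sg cycle_arcs_are_paths(2)[OF cyc split(1)] len2
        chord tf2] .
  (* both holes close up through the chord uv *)
  have "{u, v} \<in> cycle_edges H1" "{u, v} \<in> cycle_edges H2"
    using cycle_edge_last_hd[of H1] cycle_edge_last_hd[of H2] H1(2) H2(2)
    by (auto simp: is_path_def insert_commute)
  then have shared: "cycle_edges H1 \<inter> cycle_edges H2 \<noteq> {}"
    by blast
  (* the first hole leaves u along an edge uw with w interior to the first arc *)
  have "4 \<le> length H1" "hd H1 = u"
    using H1 by (simp_all add: is_hole_def is_path_def)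
  then obtain w rest where H1_eq: "H1 = u # w # rest" and "rest \<noteq> []"
    by (cases H1 rule: remdups_adj.cases) fastforce+
  then have "{u, w} \<in> cycle_edges H1"
    using cycle_edge_consecutive[of u w "[]" rest] by simp
  moreover have "w \<in> set ys"
  proof -
    have "w \<noteq> u" "w \<notin> set rest" "last rest = v"
      using H1(2) H1_eq \<open>rest \<noteq> []\<close> by (auto simp: is_path_def)
    then have "w \<noteq> v"
      using \<open>rest \<noteq> []\<close> last_in_set by metis
    then show ?thesis
      using H1(2) H1_eq \<open>w \<noteq> u\<close> by (auto simp: is_path_def)
  qed
  (* the second hole lies on the second arc, so it misses w and the edge uw *)
  then have "w \<notin> set H2"
    using H2(2) cyc split(1) by (auto simp: is_path_def is_cycle_def)
  then have "{u, w} \<notin> cycle_edges H2"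
    using cycle_edges_subset by blast
  ultimately have "cycle_edges H1 \<noteq> cycle_edges H2"
    by blast
  then show False
    using disj H1(1) H2(1) shared unfolding holes_edge_disjoint_def by blast
qed

lemma triangle_free_cycle_is_hole:
  assumes sg: "simple_graph V E" and disj: "holes_edge_disjoint V E"
    and cyc: "is_cycle V E C" and tf: "triangle_free E (set C)"
  shows "is_hole V E C"
proof -
  have "{u, v} \<in> cycle_edges C" if uv: "u \<in> set C" "v \<in> set C" "E u v" for u v
  proof (rule ccontr)
    assume "{u, v} \<notin> cycle_edges C"
    moreover have "u \<noteq> v"
      using uv(3) simple_graph_irrefl[OF sg] by blast
    ultimately obtain x y xs ys zs where xy: "{x, y} = {u, v}"
      and split: "C = xs @ x # ys @ y # zs" "ys \<noteq> []" "zs @ xs \<noteq> []"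
      using chord_splits_cycle[OF uv(1,2)] by blast
    have "E x y"
      using xy uv(3) simple_graph_sym[OF sg] by (auto simp: doubleton_eq_iff)
    then show False
      by (rule triangle_free_cycle_has_no_chord[OF sg disj cyc tf split])
  qed
  then show ?thesis
    using cyc triangle_free_cycle_long[OF sg cyc tf] by (simp add: is_hole_def)
qed

theorem lemma2:
  fixes V :: "'a set" and E :: "'a \<Rightarrow> 'a \<Rightarrow> bool" and K :: "'a set"
  assumes "simple_graph V E" and "connected_graph V E"
    and "holes_edge_disjoint V E"
    and "maximal_clique V E K" and "card K \<ge> 3"
    and "\<forall>K'. maximal_clique V E K' \<and> card K' \<ge> 3 \<longrightarrow> K' = K"
  shows "\<forall>C. is_cycle V E C \<longrightarrow> (is_hole V E C \<longleftrightarrow> card (K \<inter> set C) \<le> 2)"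
proof (intro allI impI)
  fix C
  assume cyc: "is_cycle V E C"
  show "is_hole V E C \<longleftrightarrow> card (K \<inter> set C) \<le> 2"
  proof
    assume "is_hole V E C"
    moreover have "is_clique V E K"
      using assms(4) by (simp add: maximal_clique_def)
    ultimately show "card (K \<inter> set C) \<le> 2"
      by (rule hole_meets_clique_in_at_most_two)
  next
    assume "card (K \<inter> set C) \<le> 2"
    then have "triangle_free E (set C)"
      by (rule triangle_free_outside_large_clique[OF assms(1,4,6)])
    then show "is_hole V E C"
      by (rule triangle_free_cycle_is_hole[OF assms(1,3) cyc])
  qed
qed

end
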